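(* Let $M\ge4$. If a coarsely bottlenecked graph $G$ has a skeleton $G_{\lambda,k}$ such that $G_{(\lambda,k)_{(2,2)}}$ contains an $M$-fat $H$ minor, then $G_{\lambda,k}$ contains an $(M+\frac M2-2)$-fat $H$ minor.
   Context: All graphs are connected (and unbounded); $d$ is the graph metric. Sets $X,Y$ are $r$-disjoint if $d(a,b)>r$ for all $a\in X,b\in Y$; $X$ is $k$-connected if any two of its points are joined by a finite sequence in $X$ with consecutive distances $\le k$; $N_r(S)=\{y:d(s,y)<r\text{ for some }s\in S\}$. $G$ is $M$-fat $n$-bottlenecked if for any two connected $M$-disjoint subgraphs $X,Y$ there is $S\subset V(G)\setminus(V(X)\cup V(Y))$, $|S|=n$, such that every path from $X$ to $Y$ meets $N_M(S)$; coarsely bottlenecked means this holds for some $M,n$. $H$ is an $M$-fat minor of a graph $\Gamma$ if there are connected subgraphs $B_v$ ($v\in V(H)$) and paths $P_e$ ($e\in E(H)$), $P_e$ joining $B_u$ to $B_v$ for $e=uv$, any two of which are $M$-disjoint unless they correspond to an incident vertex–edge pair of $H$. Skeleton $\Gamma_{\lambda,k}$ of a connected graph $\Gamma$ (root $x_0$, scale $\lambda\ge1$, connectivity $k\ge1$): layers $A_{N,\lambda}=\{x: N\lambda<d(x,x_0)\le(N+1)\lambda\}$, $N\in\mathbb Z$; blocks are maximal $k$-connected subsets of layers; $\Gamma_{\lambda,k}$ has a vertex per block and an edge between two blocks iff an edge of $\Gamma$ joins them. $G_{(\lambda,k)_{(2,2)}}$ is the $(2,2)$-skeleton of the graph $G_{\lambda,k}$,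 rooted at the block containing the root of $G$. *)

theory Defs
  imports Main "HOL.Real"
begin

type_synonym 'a graph = "'a set \<times> ('a \<times> 'a) set"

definition verts :: "'a graph \<Rightarrow> 'a set" where "verts G = fst G"
definition edges :: "'a graph \<Rightarrow> ('a \<times> 'a) set" where "edges G = snd G"

definition graph :: "'a graph \<Rightarrow> bool" where
  "graph G \<longleftrightarrow> edges G \<subseteq> verts G \<times> verts G \<and> sym (edges G) \<and> irrefl (edges G)"

definition walk :: "'a graph \<Rightarrow> 'a list \<Rightarrow> bool" where
  "walk G xs \<longleftrightarrow> xs \<noteq> [] \<and> set xs \<subseteq> verts G \<and>
     (\<forall>i. Suc i < length xs \<longrightarrow> (xs ! i, xs ! Suc i) \<in> edges G)"

definition gpath :: "'a graph \<Rightarrow> 'a list \<Rightarrow> bool" where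
  "gpath G xs \<longleftrightarrow> walk G xs \<and> distinct xs"

definition connected_graph :: "'a graph \<Rightarrow> bool" where
  "connected_graph G \<longleftrightarrow> verts G \<noteq> {} \<and>
     (\<forall>x\<in>verts G. \<forall>y\<in>verts G. \<exists>xs. walk G xs \<and> hd xs = x \<and> last xs = y)"

definition gdist :: "'a graph \<Rightarrow> 'a \<Rightarrow> 'a \<Rightarrow> nat" where
  "gdist G x y = (LEAST n. \<exists>xs. walk G xs \<and> hd xs = x \<and> last xs = y \<and> length xs = Suc n)"

definition unbounded_graph :: "'a graph \<Rightarrow> bool" where
  "unbounded_graph G \<longleftrightarrow> (\<forall>x\<in>verts G. \<forall>r::real. \<exists>y\<in>verts G. real (gdist G x y) > r)"

definition subgraph :: "'a graph \<Rightarrow> 'a graph \<Rightarrow> bool" where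
  "subgraph G X \<longleftrightarrow> graph X \<and> verts X \<subseteq> verts G \<and> edges X \<subseteq> edges G"

definition r_disjoint :: "'a graph \<Rightarrow> real \<Rightarrow> 'a set \<Rightarrow> 'a set \<Rightarrow> bool" where
  "r_disjoint G r X Y \<longleftrightarrow> (\<forall>a\<in>X. \<forall>b\<in>Y. real (gdist G a b) > r)"

definition k_connected_set :: "'a graph \<Rightarrow> real \<Rightarrow> 'a set \<Rightarrow> bool" where
  "k_connected_set G k X \<longleftrightarrow> (\<forall>x\<in>X. \<forall>y\<in>X. \<exists>xs. xs \<noteq> [] \<and> set xs \<subseteq> X \<and> hd xs = x \<and> last xs = y \<and>
      (\<forall>i. Suc i < length xs \<longrightarrow> real (gdist G (xs ! i) (xs ! Suc i)) \<le> k))"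

definition nbhd :: "'a graph \<Rightarrow> real \<Rightarrow> 'a set \<Rightarrow> 'a set" where
  "nbhd G r S = {y \<in> verts G. \<exists>s\<in>S. real (gdist G s y) < r}"

definition fat_bottlenecked :: "'a graph \<Rightarrow> real \<Rightarrow> nat \<Rightarrow> bool" where
  "fat_bottlenecked G M n \<longleftrightarrow>
     (\<forall>X Y. subgraph G X \<and> connected_graph X \<and> subgraph G Y \<and> connected_graph Y \<and>
        r_disjoint G M (verts X) (verts Y) \<longrightarrow>
        (\<exists>S. finite S \<and> card S = n \<and> S \<subseteq> verts G - (verts X \<union> verts Y) \<and>
           (\<forall>xs. gpath G xs \<and> hd xs \<in> verts X \<and> last xs \<in> verts Y \<longrightarrow>
                set xs \<inter> nbhd G M S \<noteq> {})))"

definition coarsely_bottlenecked :: "'a graph \<Rightarrow> bool" where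
  "coarsely_bottlenecked G \<longleftrightarrow> (\<exists>M n. fat_bottlenecked G M n)"

definition layer :: "'a graph \<Rightarrow> 'a \<Rightarrow> real \<Rightarrow> int \<Rightarrow> 'a set" where
  "layer G x0 lam N = {x \<in> verts G. of_int N * lam < real (gdist G x0 x) \<and>
                                     real (gdist G x0 x) \<le> (of_int N + 1) * lam}"

definition is_block :: "'a graph \<Rightarrow> 'a \<Rightarrow> real \<Rightarrow> real \<Rightarrow> 'a set \<Rightarrow> bool" where
  "is_block G x0 lam k B \<longleftrightarrow> (\<exists>N. B \<subseteq> layer G x0 lam N \<and> B \<noteq> {} \<and> k_connected_set G k B \<and>
      (\<forall>B'. B \<subseteq> B' \<and> B' \<subseteq> layer G x0 lam N \<and> k_connected_set G k B' \<longrightarrow> B' = B))"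

definition skeleton :: "'a graph \<Rightarrow> 'a \<Rightarrow> real \<Rightarrow> real \<Rightarrow> 'a set graph" where
  "skeleton G x0 lam k =
     ({B. is_block G x0 lam k B},
      {(B, B'). is_block G x0 lam k B \<and> is_block G x0 lam k B' \<and> B \<noteq> B' \<and>
                (\<exists>x\<in>B. \<exists>y\<in>B'. (x, y) \<in> edges G)})"

definition skel_root :: "'a graph \<Rightarrow> 'a \<Rightarrow> real \<Rightarrow> real \<Rightarrow> 'a set" where
  "skel_root G x0 lam k = (THE B. is_block G x0 lam k B \<and> x0 \<in> B)"

definition skeleton22 :: "'a graph \<Rightarrow> 'a \<Rightarrow> real \<Rightarrow> real \<Rightarrow> 'a set set graph" where
  "skeleton22 G x0 lam k = skeleton (skeleton G x0 lam k) (skel_root G x0 lam k) 2 2"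

definition uedges :: "'b graph \<Rightarrow> 'b set set" where
  "uedges H = {{u, v} | u v. (u, v) \<in> edges H}"

definition fat_minor :: "'b graph \<Rightarrow> 'a graph \<Rightarrow> real \<Rightarrow> bool" where
  "fat_minor H \<Gamma> M \<longleftrightarrow> (\<exists>(Bs :: 'b \<Rightarrow> 'a graph) (P :: 'b set \<Rightarrow> 'a list).
     (\<forall>v\<in>verts H. subgraph \<Gamma> (Bs v) \<and> connected_graph (Bs v)) \<and>
     (\<forall>e\<in>uedges H. gpath \<Gamma> (P e) \<and>
        (\<exists>u v. e = {u, v} \<and> (u, v) \<in> edges H \<and> hd (P e) \<in> verts (Bs u) \<and> last (P e) \<in> verts (Bs v))) \<and>
     (\<forall>u\<in>verts H. \<forall>v\<in>verts H. u \<noteq> v \<longrightarrow> r_disjoint \<Gamma> M (verts (Bs u)) (verts (Bs v))) \<and>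
     (\<forall>e\<in>uedges H. \<forall>e'\<in>uedges H. e \<noteq> e' \<longrightarrow> r_disjoint \<Gamma> M (set (P e)) (set (P e'))) \<and>
     (\<forall>v\<in>verts H. \<forall>e\<in>uedges H. v \<notin> e \<longrightarrow> r_disjoint \<Gamma> M (verts (Bs v)) (set (P e))))"

end

(* Let T be the (2,2)-skeleton of the skeleton \<Gamma>. A vertex of T is a 2-connected subset of a layer
   of width 2 of \<Gamma>; its thickening N_2(W) is connected, and T-adjacent blocks contain adjacent
   vertices of \<Gamma>. Replacing every branch set and branch path of an M-fat H minor in T by the
   thickening of the union of its blocks (for a path: a \<Gamma>-path inside that thickening) gives an H minor
   in \<Gamma>. For fatness: among three consecutive vertices of a walk in \<Gamma>, two lie in one layer at
   distance at most 2, hence in one block, so a walk of length n between two blocks yields a T-walk of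
   length at most (n + 1) / 2. Points of two thickenings at distance L thus lie next to blocks at
   T-distance at most (L + 3) / 2, which exceeds M; so L > 2M - 3 \<ge> M + M/2 - 2 as M \<ge> 2. *)

theory Submission
  imports Defs
begin

section \<open>Walks and graph distance\<close>

lemma walk_iff_successively:
  "walk G xs \<longleftrightarrow> xs \<noteq> [] \<and> set xs \<subseteq> verts G \<and> successively (\<lambda>a b. (a, b) \<in> edges G) xs"
  unfolding walk_def successively_conv_nth by blast

lemma walk_nonempty: "walk G xs \<Longrightarrow> xs \<noteq> []"
  by (simp add: walk_def)

lemma walk_verts: "walk G xs \<Longrightarrow> set xs \<subseteq> verts G"
  by (simp add: walk_def)

lemma walk_singleton [simp]: "walk G [x] \<longleftrightarrow> x \<in> verts G"
  by (simp add: walk_iff_successively)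

lemma walk_Cons_Cons [simp]:
  "walk G (x # y # ys) \<longleftrightarrow> x \<in> verts G \<and> (x, y) \<in> edges G \<and> walk G (y # ys)"
  by (auto simp: walk_iff_successively)

lemma walk_rev: "graph G \<Longrightarrow> walk G xs \<Longrightarrow> walk G (rev xs)"
  by (auto simp: walk_iff_successively graph_def sym_def elim!: successively_mono)

lemma walk_subgraph: "subgraph G X \<Longrightarrow> walk X ws \<Longrightarrow> walk G ws"
  unfolding subgraph_def walk_iff_successively by (auto elim!: successively_mono)

lemma walk_append_iff:
  "walk G (xs @ ys) \<longleftrightarrow> (xs = [] \<longrightarrow> walk G ys) \<and> (ys = [] \<longrightarrow> walk G xs) \<and>
     (xs \<noteq> [] \<longrightarrow> ys \<noteq> [] \<longrightarrow> walk G xs \<and> walk G ys \<and> (last xs, hd ys) \<in> edges G)"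
  by (auto simp: walk_iff_successively successively_append_iff)

lemma walk_take: "walk G xs \<Longrightarrow> 0 < n \<Longrightarrow> walk G (take n xs)"
  using walk_append_iff[of G "take n xs" "drop n xs"] by (auto simp: walk_def)

lemma walk_drop: "walk G xs \<Longrightarrow> n < length xs \<Longrightarrow> walk G (drop n xs)"
  using walk_append_iff[of G "take n xs" "drop n xs"] by (cases "n = 0") auto

lemma successively_glue:
  assumes "successively P xs" "successively P ys" "xs \<noteq> []" "last xs = hd ys"
  shows "successively P (xs @ tl ys)"
proof (cases ys)
  case (Cons y ys')
  then show ?thesis using assms by (cases ys') (auto simp: successively_append_iff)
qed (use assms in simp)

lemma hd_last_append_tl:
  assumes "xs \<noteq> []" "ys \<noteq> []" "last xs = hd ys"
  shows "hd (xs @ tl ys) = hd xs" "last (xs @ tl ys) = last ys"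
  using assms by (cases ys; cases "tl ys"; auto)+

lemma walk_glue: "walk G xs \<Longrightarrow> walk G ys \<Longrightarrow> last xs = hd ys \<Longrightarrow> walk G (xs @ tl ys)"
  using walk_append_iff[of G xs "tl ys"] by (cases ys; cases "tl ys") auto

lemma walk_imp_path:
  assumes "walk G xs"
  shows "\<exists>ys. gpath G ys \<and> set ys \<subseteq> set xs \<and> hd ys = hd xs \<and> last ys = last xs"
  using assms
proof (induction xs rule: induct_list012)
  case (3 x y zs)
  then obtain ys where ys: "gpath G ys" "set ys \<subseteq> set (y # zs)" "hd ys = y" "last ys = last (y # zs)"
    by auto
  have "ys \<noteq> []" using ys(1) by (simp add: gpath_def walk_def)
  show ?case
  proof (cases "x \<in> set ys")
    case True
    then obtain us vs where split: "ys = us @ x # vs" by (meson split_list)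
    then have "gpath G (x # vs)"
      using ys(1) walk_drop[of G ys "length us"] by (auto simp: gpath_def)
    then show ?thesis using ys split by (intro exI[of _ "x # vs"]) auto
  next
    case False
    then have "gpath G (x # ys)"
      using ys "3.prems" by (cases ys) (auto simp: gpath_def)
    then show ?thesis using ys by (intro exI[of _ "x # ys"]) (auto simp: \<open>ys \<noteq> []\<close>)
  qed
qed (auto simp: gpath_def intro!: exI[of _ "[_]"])

definition linked_in :: "'a graph \<Rightarrow> 'a set \<Rightarrow> 'a \<Rightarrow> 'a \<Rightarrow> bool" where
  "linked_in G S a b \<longleftrightarrow> (\<exists>ws. walk G ws \<and> set ws \<subseteq> S \<and> hd ws = a \<and> last ws = b)"

lemma linked_in_refl: "a \<in> verts G \<Longrightarrow> a \<in> S \<Longrightarrow> linked_in G S a a"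
  unfolding linked_in_def by (intro exI[of _ "[a]"]) simp

lemma linked_in_edge:
  "(a, b) \<in> edges G \<Longrightarrow> a \<in> verts G \<Longrightarrow> b \<in> verts G \<Longrightarrow> a \<in> S \<Longrightarrow> b \<in> S \<Longrightarrow> linked_in G S a b"
  unfolding linked_in_def by (intro exI[of _ "[a, b]"]) auto

lemma linked_in_trans:
  assumes "linked_in G S a b" "linked_in G S b c"
  shows "linked_in G S a c"
proof -
  obtain xs where xs: "walk G xs" "set xs \<subseteq> S" "hd xs = a" "last xs = b"
    using assms(1) unfolding linked_in_def by blast
  obtain ys where ys: "walk G ys" "set ys \<subseteq> S" "hd ys = b" "last ys = c"
    using assms(2) unfolding linked_in_def by blast
  have "walk G (xs @ tl ys)" using walk_glue[OF xs(1) ys(1)] xs ys by simp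
  moreover have "set (xs @ tl ys) \<subseteq> S" using xs ys by (cases ys) auto
  moreover have "hd (xs @ tl ys) = a" "last (xs @ tl ys) = c"
    using hd_last_append_tl[OF walk_nonempty[OF xs(1)] walk_nonempty[OF ys(1)]] xs ys by auto
  ultimately show ?thesis unfolding linked_in_def by blast
qed

lemma linked_in_sym:
  assumes "graph G" "linked_in G S a b"
  shows "linked_in G S b a"
proof -
  obtain ws where ws: "walk G ws" "set ws \<subseteq> S" "hd ws = a" "last ws = b"
    using assms(2) unfolding linked_in_def by blast
  then have "hd (rev ws) = b" "last (rev ws) = a"
    using walk_nonempty[OF ws(1)] by (simp_all add: hd_rev last_rev)
  then show ?thesis
    unfolding linked_in_def using walk_rev[OF assms(1) ws(1)] ws(2) by (metis set_rev)
qed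

lemma linked_in_mono: "linked_in G S a b \<Longrightarrow> S \<subseteq> S' \<Longrightarrow> linked_in G S' a b"
  unfolding linked_in_def by blast

lemma linked_in_imp_path:
  "linked_in G S a b \<Longrightarrow> \<exists>ys. gpath G ys \<and> set ys \<subseteq> S \<and> hd ys = a \<and> last ys = b"
  unfolding linked_in_def by (metis walk_imp_path order_trans)

lemma connected_graph_iff_linked_in:
  "connected_graph G \<longleftrightarrow> verts G \<noteq> {} \<and> (\<forall>a\<in>verts G. \<forall>b\<in>verts G. linked_in G (verts G) a b)"
  unfolding connected_graph_def linked_in_def using walk_verts by blast

lemma gdist_le_walk: "walk G ws \<Longrightarrow> gdist G (hd ws) (last ws) \<le> length ws - 1"
  unfolding gdist_def by (rule Least_le) (auto simp: walk_def)

lemma shortest_walk: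
  assumes "connected_graph G" "a \<in> verts G" "b \<in> verts G"
  obtains ws where "walk G ws" "hd ws = a" "last ws = b" "length ws = Suc (gdist G a b)"
proof -
  obtain ws where "walk G ws" "hd ws = a" "last ws = b"
    using assms unfolding connected_graph_def by blast
  then have "\<exists>n ws. walk G ws \<and> hd ws = a \<and> last ws = b \<and> length ws = Suc n"
    using walk_nonempty by (metis Suc_pred length_greater_0_conv)
  from LeastI_ex[OF this] show ?thesis
    using that unfolding gdist_def by blast
qed

lemma gdist_refl: "a \<in> verts G \<Longrightarrow> gdist G a a = 0"
  using gdist_le_walk[of G "[a]"] by simp

lemma gdist_edge: "(a, b) \<in> edges G \<Longrightarrow> graph G \<Longrightarrow> gdist G a b \<le> 1"
  using gdist_le_walk[of G "[a, b]"] by (auto simp: graph_def)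

lemma gdist_sym:
  assumes "graph G" "connected_graph G" "a \<in> verts G" "b \<in> verts G"
  shows "gdist G a b = gdist G b a"
proof -
  have le: "gdist G y x \<le> gdist G x y" if xy: "x \<in> verts G" "y \<in> verts G" for x y
  proof -
    obtain ws where ws: "walk G ws" "hd ws = x" "last ws = y" "length ws = Suc (gdist G x y)"
      using shortest_walk[OF assms(2) xy] by blast
    then have "hd (rev ws) = y" "last (rev ws) = x"
      using walk_nonempty[OF ws(1)] by (simp_all add: hd_rev last_rev)
    then show ?thesis
      using gdist_le_walk[OF walk_rev[OF assms(1) ws(1)]] ws(4) by simp
  qed
  show ?thesis using le[OF assms(3,4)] le[OF assms(4,3)] by linarith
qed

lemma gdist_triangle:
  assumes "connected_graph G" "a \<in> verts G" "b \<in> verts G" "c \<in> verts G"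
  shows "gdist G a c \<le> gdist G a b + gdist G b c"
proof -
  obtain xs where xs: "walk G xs" "hd xs = a" "last xs = b" "length xs = Suc (gdist G a b)"
    using shortest_walk[OF assms(1,2,3)] by blast
  obtain ys where ys: "walk G ys" "hd ys = b" "last ys = c" "length ys = Suc (gdist G b c)"
    using shortest_walk[OF assms(1,3,4)] by blast
  have "hd (xs @ tl ys) = a" "last (xs @ tl ys) = c"
    using hd_last_append_tl[OF walk_nonempty[OF xs(1)] walk_nonempty[OF ys(1)]] xs ys by auto
  then have "gdist G a c \<le> length (xs @ tl ys) - 1"
    using gdist_le_walk[OF walk_glue[OF xs(1) ys(1)]] xs ys by simp
  then show ?thesis using xs ys by simp
qed

lemma shortest_walk_geodesic:
  assumes "connected_graph G" "a \<in> verts G" "b \<in> verts G"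
  obtains ws where "walk G ws" "hd ws = a" "last ws = b"
    "\<forall>v\<in>set ws. gdist G a v + gdist G v b \<le> gdist G a b"
proof -
  obtain ws where ws: "walk G ws" "hd ws = a" "last ws = b" "length ws = Suc (gdist G a b)"
    using shortest_walk[OF assms] by blast
  have "gdist G a v + gdist G v b \<le> gdist G a b" if "v \<in> set ws" for v
  proof -
    obtain i where i: "i < length ws" "v = ws ! i" using \<open>v \<in> set ws\<close> by (metis in_set_conv_nth)
    have "last (take (Suc i) ws) = v" using i by (simp add: take_Suc_conv_app_nth)
    then have "gdist G a v \<le> i"
      using gdist_le_walk[OF walk_take[OF ws(1), of "Suc i"]] ws(2) i by (simp add: hd_take)
    moreover have "gdist G v b \<le> length ws - 1 - i"
      using gdist_le_walk[OF walk_drop[OF ws(1) i(1)]] ws(3) i by (simp add: hd_drop_conv_nth)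
    ultimately show ?thesis using ws(4) i(1) by linarith
  qed
  then show ?thesis using that ws by blast
qed

section \<open>Blocks\<close>

lemma k_connected_set_iff_successively:
  "k_connected_set G k X \<longleftrightarrow> (\<forall>x\<in>X. \<forall>y\<in>X. \<exists>xs. xs \<noteq> [] \<and> set xs \<subseteq> X \<and> hd xs = x \<and> last xs = y \<and>
      successively (\<lambda>a b. real (gdist G a b) \<le> k) xs)"
  unfolding k_connected_set_def successively_conv_nth by blast

lemma k_connected_set_Union:
  assumes "\<And>S. S \<in> F \<Longrightarrow> k_connected_set G k S \<and> x \<in> S"
  shows "k_connected_set G k (\<Union>F)"
  unfolding k_connected_set_iff_successively
proof (intro ballI)
  fix y z assume "y \<in> \<Union>F" "z \<in> \<Union>F"
  then obtain Sy Sz where S: "Sy \<in> F" "y \<in> Sy" "Sz \<in> F" "z \<in> Sz" by blast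
  obtain ys where ys: "ys \<noteq> []" "set ys \<subseteq> Sy" "hd ys = y" "last ys = x"
      "successively (\<lambda>a b. real (gdist G a b) \<le> k) ys"
    using assms[OF S(1)] S(2) unfolding k_connected_set_iff_successively by blast
  obtain zs where zs: "zs \<noteq> []" "set zs \<subseteq> Sz" "hd zs = x" "last zs = z"
      "successively (\<lambda>a b. real (gdist G a b) \<le> k) zs"
    using assms[OF S(3)] S(4) unfolding k_connected_set_iff_successively by blast
  have "set (ys @ tl zs) \<subseteq> \<Union>F" using ys(2) zs(2) S(1,3) by (cases zs) auto
  moreover have "hd (ys @ tl zs) = y" "last (ys @ tl zs) = z"
    using hd_last_append_tl[OF ys(1) zs(1)] ys zs by auto
  moreover have "successively (\<lambda>a b. real (gdist G a b) \<le> k) (ys @ tl zs)"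
    using successively_glue ys zs by metis
  ultimately show "\<exists>xs. xs \<noteq> [] \<and> set xs \<subseteq> \<Union>F \<and> hd xs = y \<and> last xs = z \<and>
      successively (\<lambda>a b. real (gdist G a b) \<le> k) xs"
    using ys(1) by (intro exI[of _ "ys @ tl zs"]) auto
qed

lemma k_connected_set_pair:
  assumes "graph G" "connected_graph G" "x \<in> verts G" "y \<in> verts G" "real (gdist G x y) \<le> k"
  shows "k_connected_set G k {x, y}"
  unfolding k_connected_set_iff_successively
proof (intro ballI)
  fix a b assume "a \<in> {x, y}" "b \<in> {x, y}"
  moreover have "real (gdist G y x) \<le> k" using assms gdist_sym by metis
  moreover have "gdist G x x = 0" "gdist G y y = 0" using assms(3,4) by (simp_all add: gdist_refl)
  ultimately have "successively (\<lambda>a b. real (gdist G a b) \<le> k) [a, b]"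
    using assms(5) of_nat_0_le_iff[of "gdist G x y"] by auto
  then show "\<exists>xs. xs \<noteq> [] \<and> set xs \<subseteq> {x, y} \<and> hd xs = a \<and> last xs = b \<and>
      successively (\<lambda>a b. real (gdist G a b) \<le> k) xs"
    using \<open>a \<in> {x, y}\<close> \<open>b \<in> {x, y}\<close> by (intro exI[of _ "[a, b]"]) auto
qed

lemma layer_unique:
  assumes "lam > 0" "x \<in> layer G x0 lam N" "x \<in> layer G x0 lam N'"
  shows "N = N'"
proof -
  have "of_int N * lam < (of_int N' + 1) * lam" "of_int N' * lam < (of_int N + 1) * lam"
    using assms(2,3) unfolding layer_def by auto
  then have "of_int N < of_int N' + (1::real)" "of_int N' < of_int N + (1::real)"
    using assms(1) by (simp_all add: mult_less_cancel_right_pos)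
  then show ?thesis by linarith
qed

lemma layer_exists:
  assumes "lam > 0" "x \<in> verts G"
  shows "x \<in> layer G x0 lam (\<lceil>real (gdist G x0 x) / lam\<rceil> - 1)"
proof -
  let ?d = "real (gdist G x0 x)"
  have "of_int (\<lceil>?d / lam\<rceil> - 1) < ?d / lam" "?d / lam \<le> of_int (\<lceil>?d / lam\<rceil> - 1) + 1"
    by linarith+
  then have "of_int (\<lceil>?d / lam\<rceil> - 1) * lam < ?d" "?d \<le> (of_int (\<lceil>?d / lam\<rceil> - 1) + 1) * lam"
    unfolding pos_less_divide_eq[OF assms(1)] pos_divide_le_eq[OF assms(1)] .
  then show ?thesis using assms(2) unfolding layer_def by blast
qed

text \<open>The block of x in layer N is the union of all k-connected subsets of the layer containing x.\<close>
lemma block_exists: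
  assumes "lam > 0" "x \<in> verts G"
  obtains B where "is_block G x0 lam k B" "x \<in> B"
proof -
  define N where "N = \<lceil>real (gdist G x0 x) / lam\<rceil> - 1"
  define F where "F = {S. x \<in> S \<and> S \<subseteq> layer G x0 lam N \<and> k_connected_set G k S}"
  have x: "x \<in> layer G x0 lam N" unfolding N_def by (rule layer_exists[OF assms])
  have "{x} \<in> F" unfolding F_def k_connected_set_iff_successively using x
    by (auto intro!: exI[of _ "[x]"])
  have "is_block G x0 lam k (\<Union>F)"
    unfolding is_block_def
  proof (intro exI[of _ N] conjI allI impI)
    show "\<Union>F \<subseteq> layer G x0 lam N" "\<Union>F \<noteq> {}" using \<open>{x} \<in> F\<close> unfolding F_def by blast+
    show "k_connected_set G k (\<Union>F)" by (rule k_connected_set_Union[of F G k x]) (simp add: F_def)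
    fix S assume S: "\<Union>F \<subseteq> S \<and> S \<subseteq> layer G x0 lam N \<and> k_connected_set G k S"
    then have "S \<in> F" using \<open>{x} \<in> F\<close> unfolding F_def by blast
    then show "S = \<Union>F" using S by blast
  qed
  then show ?thesis using that \<open>{x} \<in> F\<close> by blast
qed

lemma layer_subset_verts: "layer G x0 lam N \<subseteq> verts G"
  unfolding layer_def by blast

lemma block_in_layer: "is_block G x0 lam k B \<Longrightarrow> \<exists>N. B \<subseteq> layer G x0 lam N"
  unfolding is_block_def by (elim exE conjE) (rule exI)

lemma block_nonempty: "is_block G x0 lam k B \<Longrightarrow> B \<noteq> {}"
  unfolding is_block_def by (elim exE conjE)

lemma block_k_connected: "is_block G x0 lam k B \<Longrightarrow> k_connected_set G k B"
  unfolding is_block_def by (elim exE conjE)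

lemma block_subset_verts: "is_block G x0 lam k B \<Longrightarrow> B \<subseteq> verts G"
  using block_in_layer[of G x0 lam k B] layer_subset_verts[of G x0 lam] by blast

lemma block_subset_layer:
  assumes "lam > 0" "is_block G x0 lam k B" "x \<in> B" "x \<in> layer G x0 lam N"
  shows "B \<subseteq> layer G x0 lam N"
proof -
  obtain N' where N': "B \<subseteq> layer G x0 lam N'" using block_in_layer[OF assms(2)] by blast
  have "N' = N" using N' assms(3) by (intro layer_unique[OF assms(1) _ assms(4)]) blast
  then show ?thesis using N' by simp
qed

lemma block_maximal:
  assumes "lam > 0" "is_block G x0 lam k B" "B \<subseteq> C" "C \<subseteq> layer G x0 lam N"
    and "k_connected_set G k C"
  shows "C = B"
proof -
  from assms(2) obtain N' where N': "B \<subseteq> layer G x0 lam N'"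
      "\<forall>C. B \<subseteq> C \<and> C \<subseteq> layer G x0 lam N' \<and> k_connected_set G k C \<longrightarrow> C = B"
    unfolding is_block_def by (elim exE conjE) iprover
  obtain x where "x \<in> B" using block_nonempty[OF assms(2)] by blast
  then have "N' = N" using N'(1) assms(3,4) by (intro layer_unique[OF assms(1)]) blast+
  then have "B \<subseteq> C \<and> C \<subseteq> layer G x0 lam N' \<and> k_connected_set G k C" using assms(3-5) by simp
  then show ?thesis by (rule N'(2)[rule_format])
qed

lemma block_unique:
  assumes "lam > 0" "is_block G x0 lam k B" "is_block G x0 lam k B'" "x \<in> B" "x \<in> B'"
  shows "B = B'"
proof -
  obtain N where "B \<subseteq> layer G x0 lam N" using block_in_layer[OF assms(2)] by blast
  then have L: "B \<union> B' \<subseteq> layer G x0 lam N"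
    using block_subset_layer[OF assms(1,3,5)] assms(4) by auto
  have K: "k_connected_set G k (B \<union> B')"
    using k_connected_set_Union[of "{B, B'}" G k x] block_k_connected[OF assms(2)]
      block_k_connected[OF assms(3)] assms(4,5) by auto
  have "B \<union> B' = B" by (rule block_maximal[OF assms(1,2) _ L K]) simp
  moreover have "B \<union> B' = B'" by (rule block_maximal[OF assms(1,3) _ L K]) simp
  ultimately show ?thesis by simp
qed

lemma block_closed:
  assumes "lam > 0" "graph G" "connected_graph G" "is_block G x0 lam k B" "x \<in> B"
    and "x \<in> layer G x0 lam N" "y \<in> layer G x0 lam N" "real (gdist G x y) \<le> k"
  shows "y \<in> B"
proof -
  have "x \<in> verts G" "y \<in> verts G" using assms(6,7) layer_subset_verts[of G x0 lam N] by auto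
  then have "k_connected_set G k {x, y}" by (intro k_connected_set_pair assms(2,3,8))
  then have K: "k_connected_set G k (B \<union> {x, y})"
    using k_connected_set_Union[of "{B, {x, y}}" G k x] block_k_connected[OF assms(4)] assms(5) by auto
  have L: "B \<union> {x, y} \<subseteq> layer G x0 lam N"
    using block_subset_layer[OF assms(1,4,5,6)] assms(6,7) by blast
  have "B \<union> {x, y} = B" by (rule block_maximal[OF assms(1,4) _ L K]) blast
  then show ?thesis by blast
qed

section \<open>Skeletons\<close>

lemma verts_skeleton: "verts (skeleton G x0 lam k) = {B. is_block G x0 lam k B}"
  unfolding skeleton_def verts_def by simp

lemma edges_skeleton: "(B, B') \<in> edges (skeleton G x0 lam k) \<longleftrightarrow>
   is_block G x0 lam k B \<and> is_block G x0 lam k B' \<and> B \<noteq> B' \<and> (\<exists>x\<in>B. \<exists>y\<in>B'. (x, y) \<in> edges G)"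
  unfolding skeleton_def edges_def by simp

lemma graph_skeleton:
  assumes "graph G"
  shows "graph (skeleton G x0 lam k)"
  unfolding graph_def
proof (intro conjI)
  show "edges (skeleton G x0 lam k) \<subseteq> verts (skeleton G x0 lam k) \<times> verts (skeleton G x0 lam k)"
    by (auto simp: verts_skeleton edges_skeleton)
  show "irrefl (edges (skeleton G x0 lam k))"
    unfolding irrefl_def by (simp add: edges_skeleton)
  have "(y, x) \<in> edges G" if "(x, y) \<in> edges G" for x y
    using assms that unfolding graph_def sym_def by blast
  then show "sym (edges (skeleton G x0 lam k))"
    unfolding sym_def edges_skeleton by metis
qed

lemma skeleton_edge_or_eq:
  assumes "(x, y) \<in> edges G" "is_block G x0 lam k B" "x \<in> B" "is_block G x0 lam k B'" "y \<in> B'"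
  shows "B = B' \<or> (B, B') \<in> edges (skeleton G x0 lam k)"
  using assms by (auto simp: edges_skeleton)

lemma gdist_skeleton_le_1:
  assumes "(x, y) \<in> edges G" "is_block G x0 lam k B" "x \<in> B" "is_block G x0 lam k B'" "y \<in> B'"
  shows "gdist (skeleton G x0 lam k) B B' \<le> 1"
proof (cases "B = B'")
  case True
  then show ?thesis using assms(2) by (simp add: gdist_refl verts_skeleton)
next
  case False
  then have "walk (skeleton G x0 lam k) [B, B']"
    using skeleton_edge_or_eq[OF assms] assms(2,4) by (simp add: verts_skeleton)
  from gdist_le_walk[OF this] show ?thesis by simp
qed

lemma linked_in_skeleton_walk:
  assumes "lam > 0" "walk G ws"
    and "is_block G x0 lam k B" "hd ws \<in> B" "is_block G x0 lam k B'" "last ws \<in> B'"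
  shows "linked_in (skeleton G x0 lam k) (verts (skeleton G x0 lam k)) B B'"
  using assms(2-4,6)
proof (induction ws arbitrary: B rule: induct_list012)
  case (2 x)
  then have "B = B'" using block_unique[OF assms(1) _ assms(5), of B x] by simp
  then show ?case using assms(5) by (simp add: linked_in_refl verts_skeleton)
next
  case (3 x y zs)
  have "y \<in> verts G" using "3.prems"(1) walk_verts[of G "x # y # zs"] by simp
  then obtain By where By: "is_block G x0 lam k By" "y \<in> By" by (rule block_exists[OF assms(1)])
  have "linked_in (skeleton G x0 lam k) (verts (skeleton G x0 lam k)) By B'"
    using "3.IH"(2) "3.prems" By by simp
  moreover have "linked_in (skeleton G x0 lam k) (verts (skeleton G x0 lam k)) B By"
  proof (cases "B = By")
    case True
    then show ?thesis using By(1) by (simp add: linked_in_refl verts_skeleton)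
  next
    case False
    then have "(B, By) \<in> edges (skeleton G x0 lam k)"
      using skeleton_edge_or_eq[of x y G x0 lam k B By] "3.prems" By by simp
    then show ?thesis using "3.prems"(2) By(1) by (simp add: linked_in_edge verts_skeleton)
  qed
  ultimately show ?case by (rule linked_in_trans[rotated])
qed (simp add: walk_def)

lemma connected_skeleton:
  assumes "lam > 0" "connected_graph G"
  shows "connected_graph (skeleton G x0 lam k)"
  unfolding connected_graph_iff_linked_in
proof (intro conjI ballI)
  obtain x where "x \<in> verts G" using assms(2) unfolding connected_graph_def by blast
  then show "verts (skeleton G x0 lam k) \<noteq> {}"
    using block_exists[OF assms(1), of x G x0 k] by (auto simp: verts_skeleton)
next
  fix B B' assume "B \<in> verts (skeleton G x0 lam k)" "B' \<in> verts (skeleton G x0 lam k)"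
  then have B: "is_block G x0 lam k B" "is_block G x0 lam k B'" by (simp_all add: verts_skeleton)
  obtain a b where "a \<in> B" "b \<in> B'" using block_nonempty[OF B(1)] block_nonempty[OF B(2)] by blast
  moreover have "a \<in> verts G" "b \<in> verts G"
    using calculation block_subset_verts[OF B(1)] block_subset_verts[OF B(2)] by auto
  ultimately obtain ws where "walk G ws" "hd ws = a" "last ws = b"
    using assms(2) unfolding connected_graph_def by blast
  then show "linked_in (skeleton G x0 lam k) (verts (skeleton G x0 lam k)) B B'"
    using linked_in_skeleton_walk[OF assms(1) _ B(1) _ B(2)] \<open>a \<in> B\<close> \<open>b \<in> B'\<close> by simp
qed

lemma skel_root_block:
  assumes "lam > 0" "x0 \<in> verts G"
  shows "is_block G x0 lam k (skel_root G x0 lam k)" "x0 \<in> skel_root G x0 lam k"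
proof -
  obtain B where B: "is_block G x0 lam k B" "x0 \<in> B" by (rule block_exists[OF assms])
  have "\<exists>!B. is_block G x0 lam k B \<and> x0 \<in> B"
  proof (rule ex1I[of _ B])
    fix B' assume "is_block G x0 lam k B' \<and> x0 \<in> B'"
    then show "B' = B" using block_unique[OF assms(1) _ B(1), of B' x0] B(2) by simp
  qed (use B in simp)
  from theI'[OF this] show "is_block G x0 lam k (skel_root G x0 lam k)" "x0 \<in> skel_root G x0 lam k"
    unfolding skel_root_def by simp_all
qed

section \<open>Distances in the (2,2)-skeleton\<close>

lemma layer_2_index: "x \<in> verts K \<Longrightarrow> x \<in> layer K r 2 (int ((gdist K r x + 1) div 2) - 1)"
  unfolding layer_def by simp linarith

lemma two_of_three_halves_eq:
  fixes a b c :: nat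
  assumes "b \<le> a + 1" "a \<le> b + 1" "c \<le> b + 1" "b \<le> c + 1"
  shows "(a + 1) div 2 = (c + 1) div 2 \<or> (a + 1) div 2 = (b + 1) div 2 \<or> (b + 1) div 2 = (c + 1) div 2"
proof -
  consider "a = b" | "c = b" | "a = c" | "a = b + 1" "b = c + 1" | "b = a + 1" "c = b + 1"
    using assms by linarith
  then show ?thesis
  proof cases
    case 4
    then show ?thesis by (cases "even c") (auto elim!: evenE oddE)
  next
    case 5
    then show ?thesis by (cases "even a") (auto elim!: evenE oddE)
  qed auto
qed

lemma gdist_edge_step:
  assumes "graph K" "connected_graph K" "r \<in> verts K" "(x, y) \<in> edges K"
  shows "gdist K r y \<le> gdist K r x + 1"
proof -
  have "x \<in> verts K" "y \<in> verts K" using assms(1,4) unfolding graph_def by auto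
  then show ?thesis using gdist_triangle[OF assms(2,3)] gdist_edge[OF assms(4,1)] by fastforce
qed

lemma gdist_skeleton22_two_steps:
  assumes K: "graph K" "connected_graph K" "r \<in> verts K"
    and edges: "(x, y) \<in> edges K" "(y, z) \<in> edges K"
    and blocks: "is_block K r 2 2 Bx" "x \<in> Bx" "is_block K r 2 2 Bz" "z \<in> Bz"
  shows "gdist (skeleton K r 2 2) Bx Bz \<le> 1"
proof -
  define N where "N v = int ((gdist K r v + 1) div 2) - 1" for v
  have yx: "(y, x) \<in> edges K" and zy: "(z, y) \<in> edges K"
    using K(1) edges unfolding graph_def sym_def by blast+
  have v: "x \<in> verts K" "y \<in> verts K" "z \<in> verts K" using K(1) edges unfolding graph_def by auto
  have layers: "v \<in> layer K r 2 (N v)" if "v \<in> verts K" for v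
    unfolding N_def using layer_2_index[OF that] .
  have "N x = N z \<or> N x = N y \<or> N y = N z"
    using two_of_three_halves_eq[OF gdist_edge_step[OF K edges(1)] gdist_edge_step[OF K yx]
        gdist_edge_step[OF K edges(2)] gdist_edge_step[OF K zy]]
    unfolding N_def by auto
  then consider "N x = N z" | "N x = N y" | "N y = N z" by blast
  then show ?thesis
  proof cases
    case 1
    have "gdist K x z \<le> 2"
      using gdist_triangle[OF K(2) v] gdist_edge[OF edges(1) K(1)] gdist_edge[OF edges(2) K(1)] by simp
    then have "z \<in> Bx" using block_closed[OF _ K(1,2) blocks(1,2) layers[OF v(1)]] layers[OF v(3)] 1 by simp
    then have "Bx = Bz" using block_unique[OF _ blocks(1,3)] blocks(4) by simp
    then show ?thesis using blocks(3) by (simp add: gdist_refl verts_skeleton)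
  next
    case 2
    have "gdist K x y \<le> 1" by (rule gdist_edge[OF edges(1) K(1)])
    then have "y \<in> Bx" using block_closed[OF _ K(1,2) blocks(1,2) layers[OF v(1)]] layers[OF v(2)] 2 by simp
    then show ?thesis using gdist_skeleton_le_1[OF edges(2) blocks(1) _ blocks(3,4)] by simp
  next
    case 3
    have "gdist K z y \<le> 1" by (rule gdist_edge[OF zy K(1)])
    then have "y \<in> Bz" using block_closed[OF _ K(1,2) blocks(3,4) layers[OF v(3)]] layers[OF v(2)] 3 by simp
    then show ?thesis using gdist_skeleton_le_1[OF edges(1) blocks(1,2,3)] by simp
  qed
qed

lemma gdist_skeleton22_walk:
  assumes K: "graph K" "connected_graph K" "r \<in> verts K" and "walk K ws"
    and "is_block K r 2 2 B" "hd ws \<in> B" "is_block K r 2 2 B'" "last ws \<in> B'"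
  shows "gdist (skeleton K r 2 2) B B' \<le> length ws div 2"
  using assms(4-6,8)
proof (induction ws arbitrary: B rule: induct_list012)
  case (2 x)
  then have "B = B'" using block_unique[of 2 K r 2 B B' x] assms(7) by simp
  then show ?case using assms(7) by (simp add: gdist_refl verts_skeleton)
next
  case (3 x y zs)
  show ?case
  proof (cases zs)
    case Nil
    then show ?thesis using gdist_skeleton_le_1[of x y K r 2 2 B B'] "3.prems" assms(7) by simp
  next
    case (Cons z zs')
    have z: "z \<in> verts K" using "3.prems"(1) walk_verts[of K "x # y # zs"] Cons by simp
    obtain Bz where Bz: "is_block K r 2 2 Bz" "z \<in> Bz"
      by (rule block_exists[of 2 z K r 2]) (simp_all add: z)
    have "(x, y) \<in> edges K" "(y, z) \<in> edges K" using "3.prems"(1) Cons by simp_all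
    then have "gdist (skeleton K r 2 2) B Bz \<le> 1"
      using gdist_skeleton22_two_steps[OF K _ _ "3.prems"(2) _ Bz] "3.prems"(3) by simp
    moreover have "gdist (skeleton K r 2 2) Bz B' \<le> length zs div 2"
      using "3.IH"(1) "3.prems" Bz Cons by simp
    moreover have "gdist (skeleton K r 2 2) B B' \<le>
        gdist (skeleton K r 2 2) B Bz + gdist (skeleton K r 2 2) Bz B'"
      using gdist_triangle[OF connected_skeleton[OF _ K(2)]] "3.prems"(2) Bz(1) assms(7)
      by (simp add: verts_skeleton)
    ultimately show ?thesis by simp
  qed
qed (simp add: walk_def)

lemma gdist_skeleton22_le:
  assumes K: "graph K" "connected_graph K" "r \<in> verts K"
    and "is_block K r 2 2 B" "a \<in> B" "is_block K r 2 2 B'" "b \<in> B'"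
  shows "gdist (skeleton K r 2 2) B B' \<le> (gdist K a b + 1) div 2"
proof -
  have "a \<in> verts K" "b \<in> verts K"
    using assms(5,7) block_subset_verts[OF assms(4)] block_subset_verts[OF assms(6)] by auto
  then obtain ws where "walk K ws" "hd ws = a" "last ws = b" "length ws = Suc (gdist K a b)"
    by (rule shortest_walk[OF K(2)])
  then show ?thesis using gdist_skeleton22_walk[OF K, of ws B B'] assms(4-7) by simp
qed

section \<open>Thickened blocks\<close>

lemma mem_nbhd_2_iff: "y \<in> nbhd K 2 A \<longleftrightarrow> y \<in> verts K \<and> (\<exists>s\<in>A. gdist K s y \<le> 1)"
  unfolding nbhd_def by (auto simp: numeral_2_eq_2 less_Suc_eq_le)

lemma nbhd_mono: "A \<subseteq> B \<Longrightarrow> nbhd K r A \<subseteq> nbhd K r B"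
  unfolding nbhd_def by blast

lemma nbhd_subset_verts: "nbhd G r A \<subseteq> verts G"
  unfolding nbhd_def by blast

lemma mem_nbhd_2_self: "y \<in> A \<Longrightarrow> y \<in> verts K \<Longrightarrow> y \<in> nbhd K 2 A"
  unfolding mem_nbhd_2_iff using gdist_refl[of y K] by force

lemma linked_in_nbhd_2_singleton:
  assumes "connected_graph K" "s \<in> verts K" "a \<in> nbhd K 2 {s}"
  shows "linked_in K (nbhd K 2 {s}) s a"
proof -
  have a: "a \<in> verts K" "gdist K s a \<le> 1" using assms(3) unfolding mem_nbhd_2_iff by auto
  obtain ws where ws: "walk K ws" "hd ws = s" "last ws = a"
      "\<forall>v\<in>set ws. gdist K s v + gdist K v a \<le> gdist K s a"
    by (rule shortest_walk_geodesic[OF assms(1,2) a(1)])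
  have "set ws \<subseteq> nbhd K 2 {s}"
    unfolding subset_eq mem_nbhd_2_iff using ws(4) a(2) walk_verts[OF ws(1)] by fastforce
  then show ?thesis unfolding linked_in_def using ws(1-3) by blast
qed

lemma linked_in_nbhd_2_pair:
  assumes "graph K" "connected_graph K" "x \<in> verts K" "y \<in> verts K" "gdist K x y \<le> 2"
  shows "linked_in K (nbhd K 2 {x, y}) x y"
proof -
  obtain ws where ws: "walk K ws" "hd ws = x" "last ws = y"
      "\<forall>v\<in>set ws. gdist K x v + gdist K v y \<le> gdist K x y"
    by (rule shortest_walk_geodesic[OF assms(2-4)])
  have "v \<in> nbhd K 2 {x, y}" if "v \<in> set ws" for v
  proof -
    have v: "v \<in> verts K" using walk_verts[OF ws(1)] that by blast
    then have "gdist K y v = gdist K v y" using gdist_sym[OF assms(1,2,4)] by simp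
    then show ?thesis unfolding mem_nbhd_2_iff using ws(4) that assms(5) v by fastforce
  qed
  then show ?thesis unfolding linked_in_def using ws(1-3) by blast
qed

lemma linked_in_nbhd_2_chain:
  assumes "graph K" "connected_graph K" "W \<subseteq> verts K"
  shows "xs \<noteq> [] \<Longrightarrow> set xs \<subseteq> W \<Longrightarrow> successively (\<lambda>a b. real (gdist K a b) \<le> 2) xs \<Longrightarrow>
    linked_in K (nbhd K 2 W) (hd xs) (last xs)"
proof (induction xs rule: induct_list012)
  case (2 x)
  then have "x \<in> verts K" "x \<in> nbhd K 2 W" using assms(3) mem_nbhd_2_self[of x W K] by auto
  then show ?case by (simp add: linked_in_refl)
next
  case (3 x y zs)
  then have xy: "x \<in> W" "y \<in> W" "gdist K x y \<le> 2" by simp_all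
  then have "linked_in K (nbhd K 2 {x, y}) x y"
    using assms(3) by (intro linked_in_nbhd_2_pair[OF assms(1,2)]) auto
  moreover have "nbhd K 2 {x, y} \<subseteq> nbhd K 2 W" using xy by (intro nbhd_mono) simp
  ultimately have "linked_in K (nbhd K 2 W) x y" by (rule linked_in_mono)
  moreover have "linked_in K (nbhd K 2 W) y (last (y # zs))" using "3.IH"(2) "3.prems" by simp
  ultimately have "linked_in K (nbhd K 2 W) x (last (y # zs))" by (rule linked_in_trans)
  then show ?case by simp
qed simp

lemma linked_in_nbhd_2_k_connected:
  assumes "graph K" "connected_graph K" "W \<subseteq> verts K" "k_connected_set K 2 W"
    and "a \<in> nbhd K 2 W" "b \<in> nbhd K 2 W"
  shows "linked_in K (nbhd K 2 W) a b"
proof -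
  have near: "linked_in K (nbhd K 2 W) s c" if "c \<in> nbhd K 2 W" "s \<in> W" "c \<in> nbhd K 2 {s}" for s c
  proof (rule linked_in_mono)
    show "linked_in K (nbhd K 2 {s}) s c"
      using that(2,3) assms(3) by (intro linked_in_nbhd_2_singleton[OF assms(2)]) auto
    show "nbhd K 2 {s} \<subseteq> nbhd K 2 W" using that(2) by (intro nbhd_mono) simp
  qed
  obtain s t where st: "s \<in> W" "a \<in> nbhd K 2 {s}" "t \<in> W" "b \<in> nbhd K 2 {t}"
    using assms(5,6) unfolding mem_nbhd_2_iff by blast
  obtain xs where "xs \<noteq> []" "set xs \<subseteq> W" "hd xs = s" "last xs = t"
      "successively (\<lambda>a b. real (gdist K a b) \<le> 2) xs"
    using assms(4) st(1,3) unfolding k_connected_set_iff_successively by blast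
  then have "linked_in K (nbhd K 2 W) s t" using linked_in_nbhd_2_chain[OF assms(1-3)] by metis
  moreover have "linked_in K (nbhd K 2 W) a s"
    using linked_in_sym[OF assms(1) near[OF assms(5) st(1,2)]] .
  moreover have "linked_in K (nbhd K 2 W) t b" using near[OF assms(6) st(3,4)] .
  ultimately show ?thesis using linked_in_trans by metis
qed

lemma linked_in_nbhd_2_skeleton22_walk:
  assumes "graph K" "connected_graph K" "walk (skeleton K r 2 2) Q"
    and "a \<in> nbhd K 2 (hd Q)" "b \<in> nbhd K 2 (last Q)"
  shows "linked_in K (nbhd K 2 (\<Union>(set Q))) a b"
  using assms(3-5)
proof (induction Q arbitrary: a rule: induct_list012)
  case (2 W)
  then have "is_block K r 2 2 W" by (simp add: verts_skeleton)
  then show ?case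
    using linked_in_nbhd_2_k_connected[OF assms(1,2) block_subset_verts block_k_connected] "2.prems"
    by simp
next
  case (3 W W' Q)
  have blocks: "is_block K r 2 2 W" "is_block K r 2 2 W'"
    using "3.prems"(1) walk_verts[of "skeleton K r 2 2" "W # W' # Q"] by (auto simp: verts_skeleton)
  obtain p q where pq: "p \<in> W" "q \<in> W'" "(p, q) \<in> edges K"
    using "3.prems"(1) by (auto simp: edges_skeleton)
  have sub: "nbhd K 2 W \<subseteq> nbhd K 2 (\<Union>(set (W # W' # Q)))"
    "nbhd K 2 (\<Union>(set (W' # Q))) \<subseteq> nbhd K 2 (\<Union>(set (W # W' # Q)))"
    by (intro nbhd_mono; auto)+
  have W: "W \<subseteq> nbhd K 2 W" "W' \<subseteq> nbhd K 2 W'"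
    using block_subset_verts[OF blocks(1)] block_subset_verts[OF blocks(2)]
    by (auto intro: mem_nbhd_2_self)
  have "linked_in K (nbhd K 2 W) a p"
    using linked_in_nbhd_2_k_connected[OF assms(1,2) block_subset_verts[OF blocks(1)]
        block_k_connected[OF blocks(1)]]
      "3.prems"(2) pq(1) W(1) by auto
  moreover have "linked_in K (nbhd K 2 (\<Union>(set (W' # Q)))) q b"
    using "3.IH"(2) "3.prems" pq(2) W(2) by auto
  moreover have "linked_in K (nbhd K 2 (\<Union>(set (W # W' # Q)))) p q"
    using pq W sub assms(1) nbhd_mono[of W' "\<Union>(set (W' # Q))" K 2]
    unfolding graph_def by (intro linked_in_edge) auto
  ultimately show ?case using sub linked_in_mono linked_in_trans by metis
qed (simp add: walk_def)

lemma r_disjoint_nbhd_2_skeleton22: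
  assumes K: "graph K" "connected_graph K" "r \<in> verts K" and "M \<ge> 2"
    and XY: "X \<subseteq> verts (skeleton K r 2 2)" "Y \<subseteq> verts (skeleton K r 2 2)"
    and disj: "r_disjoint (skeleton K r 2 2) M X Y"
  shows "r_disjoint K (M + M / 2 - 2) (nbhd K 2 (\<Union>X)) (nbhd K 2 (\<Union>Y))"
  unfolding r_disjoint_def
proof (intro ballI)
  fix a b assume "a \<in> nbhd K 2 (\<Union>X)" "b \<in> nbhd K 2 (\<Union>Y)"
  then obtain Wa s Wb t
    where st: "Wa \<in> X" "s \<in> Wa" "gdist K s a \<le> 1" "Wb \<in> Y" "t \<in> Wb" "gdist K t b \<le> 1"
      and ab: "a \<in> verts K" "b \<in> verts K"
    unfolding mem_nbhd_2_iff by blast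
  have blocks: "is_block K r 2 2 Wa" "is_block K r 2 2 Wb" using XY st(1,4) by (auto simp: verts_skeleton)
  have s: "s \<in> verts K" and t: "t \<in> verts K"
    using st(2,5) block_subset_verts[OF blocks(1)] block_subset_verts[OF blocks(2)] by auto
  have "gdist K s t \<le> gdist K s a + gdist K a b + gdist K b t"
    using gdist_triangle[OF K(2) s ab(1) t] gdist_triangle[OF K(2) ab t] by simp
  moreover have "gdist K b t = gdist K t b" by (rule gdist_sym[OF K(1,2) ab(2) t])
  ultimately have "gdist K s t \<le> gdist K a b + 2" using st(3,6) by simp
  then have "gdist (skeleton K r 2 2) Wa Wb \<le> (gdist K a b + 3) div 2"
    using gdist_skeleton22_le[OF K blocks(1) st(2) blocks(2) st(5)] by simp
  moreover have "M < real (gdist (skeleton K r 2 2) Wa Wb)"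
    using disj st(1,4) unfolding r_disjoint_def by blast
  moreover have "real ((gdist K a b + 3) div 2) \<le> (real (gdist K a b) + 3) / 2"
    using of_nat_div_le_of_nat[of "gdist K a b + 3" 2] by simp
  ultimately show "M + M / 2 - 2 < real (gdist K a b)" using assms(4) by linarith
qed

section \<open>Fat minors\<close>

definition induced_subgraph :: "'a graph \<Rightarrow> 'a set \<Rightarrow> 'a graph" where
  "induced_subgraph G S = (S, edges G \<inter> S \<times> S)"

lemma verts_induced_subgraph [simp]: "verts (induced_subgraph G S) = S"
  unfolding induced_subgraph_def verts_def by simp

lemma edges_induced_subgraph [simp]: "edges (induced_subgraph G S) = edges G \<inter> S \<times> S"
  unfolding induced_subgraph_def edges_def by simp

lemma subgraph_induced_subgraph: "graph G \<Longrightarrow> S \<subseteq> verts G \<Longrightarrow> subgraph G (induced_subgraph G S)"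
  unfolding subgraph_def graph_def sym_def irrefl_def by auto

lemma connected_induced_subgraph:
  assumes "S \<noteq> {}" "\<And>a b. a \<in> S \<Longrightarrow> b \<in> S \<Longrightarrow> linked_in G S a b"
  shows "connected_graph (induced_subgraph G S)"
  unfolding connected_graph_def
proof (intro conjI ballI)
  fix a b assume "a \<in> verts (induced_subgraph G S)" "b \<in> verts (induced_subgraph G S)"
  then obtain ws where "walk G ws" "set ws \<subseteq> S" "hd ws = a" "last ws = b"
    using assms(2) unfolding linked_in_def by auto
  moreover from this have "walk (induced_subgraph G S) ws"
    by (auto simp: walk_iff_successively elim!: successively_mono)
  ultimately show "\<exists>ws. walk (induced_subgraph G S) ws \<and> hd ws = a \<and> last ws = b" by blast
qed (use assms(1) in simp)

lemma r_disjoint_mono: "r_disjoint G r X Y \<Longrightarrow> X' \<subseteq> X \<Longrightarrow> Y' \<subseteq> Y \<Longrightarrow> r_disjoint G r X' Y'"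
  unfolding r_disjoint_def by blast

lemma connected_induced_nbhd_2_skeleton22:
  assumes "graph K" "connected_graph K"
    and "subgraph (skeleton K r 2 2) X" "connected_graph X"
  shows "connected_graph (induced_subgraph K (nbhd K 2 (\<Union>(verts X))))"
proof (rule connected_induced_subgraph)
  obtain W where W: "W \<in> verts X" using assms(4) unfolding connected_graph_def by blast
  then have "is_block K r 2 2 W" using assms(3) unfolding subgraph_def by (auto simp: verts_skeleton)
  then obtain x where "x \<in> W" "x \<in> verts K"
    using block_nonempty[of K r 2 2 W] block_subset_verts[of K r 2 2 W] by blast
  then have "x \<in> nbhd K 2 (\<Union>(verts X))" using W by (intro mem_nbhd_2_self) auto
  then show "nbhd K 2 (\<Union>(verts X)) \<noteq> {}" by blast
next
  fix a b assume "a \<in> nbhd K 2 (\<Union>(verts X))" "b \<in> nbhd K 2 (\<Union>(verts X))"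
  then obtain Wa Wb where W: "Wa \<in> verts X" "a \<in> nbhd K 2 Wa" "Wb \<in> verts X" "b \<in> nbhd K 2 Wb"
    unfolding mem_nbhd_2_iff by blast
  then obtain Q where Q: "walk X Q" "hd Q = Wa" "last Q = Wb"
    using assms(4) unfolding connected_graph_def by blast
  have "linked_in K (nbhd K 2 (\<Union>(set Q))) a b"
    using linked_in_nbhd_2_skeleton22_walk[OF assms(1,2) walk_subgraph[OF assms(3) Q(1)]] Q(2,3) W(2,4)
    by simp
  moreover have "nbhd K 2 (\<Union>(set Q)) \<subseteq> nbhd K 2 (\<Union>(verts X))"
    using walk_verts[OF Q(1)] by (intro nbhd_mono) auto
  ultimately show "linked_in K (nbhd K 2 (\<Union>(verts X))) a b" by (rule linked_in_mono)
qed

lemma path_in_nbhd_2_skeleton22_walk: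
  assumes "graph K" "connected_graph K" "walk (skeleton K r 2 2) Q"
  obtains ys where "gpath K ys" "set ys \<subseteq> nbhd K 2 (\<Union>(set Q))" "hd ys \<in> hd Q" "last ys \<in> last Q"
proof -
  have "hd Q \<in> set Q" "last Q \<in> set Q" using walk_nonempty[OF assms(3)] by simp_all
  then have blocks: "is_block K r 2 2 (hd Q)" "is_block K r 2 2 (last Q)"
    using walk_verts[OF assms(3)] by (auto simp: verts_skeleton)
  obtain a b where ab: "a \<in> hd Q" "b \<in> last Q"
    using block_nonempty[OF blocks(1)] block_nonempty[OF blocks(2)] by blast
  then have "a \<in> nbhd K 2 (hd Q)" "b \<in> nbhd K 2 (last Q)"
    using block_subset_verts[OF blocks(1)] block_subset_verts[OF blocks(2)]
    by (auto intro: mem_nbhd_2_self)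
  then have "linked_in K (nbhd K 2 (\<Union>(set Q))) a b"
    by (rule linked_in_nbhd_2_skeleton22_walk[OF assms])
  then obtain ys where "gpath K ys" "set ys \<subseteq> nbhd K 2 (\<Union>(set Q))" "hd ys = a" "last ys = b"
    using linked_in_imp_path[of K] by blast
  then show ?thesis using that ab by simp
qed

lemma branch_paths_in_nbhd_2_skeleton22:
  assumes "graph K" "connected_graph K"
    and "\<forall>e\<in>E. gpath (skeleton K r 2 2) (P e) \<and>
      (\<exists>u v. e = {u, v} \<and> (u, v) \<in> edges H \<and> hd (P e) \<in> verts (Bs u) \<and> last (P e) \<in> verts (Bs v))"
  obtains P' where "\<forall>e\<in>E. gpath K (P' e) \<and> set (P' e) \<subseteq> nbhd K 2 (\<Union>(set (P e))) \<and>
      (\<exists>u v. e = {u, v} \<and> (u, v) \<in> edges H \<and>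
        hd (P' e) \<in> nbhd K 2 (\<Union>(verts (Bs u))) \<and> last (P' e) \<in> nbhd K 2 (\<Union>(verts (Bs v))))"
proof -
  have "\<forall>e\<in>E. \<exists>ys. gpath K ys \<and> set ys \<subseteq> nbhd K 2 (\<Union>(set (P e))) \<and>
      (\<exists>u v. e = {u, v} \<and> (u, v) \<in> edges H \<and>
        hd ys \<in> nbhd K 2 (\<Union>(verts (Bs u))) \<and> last ys \<in> nbhd K 2 (\<Union>(verts (Bs v))))"
  proof
    fix e assume "e \<in> E"
    then obtain u v where uv: "e = {u, v}" "(u, v) \<in> edges H"
        "hd (P e) \<in> verts (Bs u)" "last (P e) \<in> verts (Bs v)"
      using assms(3) by blast
    have "walk (skeleton K r 2 2) (P e)" using assms(3) \<open>e \<in> E\<close> unfolding gpath_def by blast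
    then obtain ys where ys: "gpath K ys" "set ys \<subseteq> nbhd K 2 (\<Union>(set (P e)))"
        "hd ys \<in> hd (P e)" "last ys \<in> last (P e)"
      by (rule path_in_nbhd_2_skeleton22_walk[OF assms(1,2)])
    have "hd ys \<in> verts K" "last ys \<in> verts K"
      using walk_verts[of K ys] walk_nonempty[of K ys] ys(1) unfolding gpath_def by auto
    then have "hd ys \<in> nbhd K 2 (\<Union>(verts (Bs u)))" "last ys \<in> nbhd K 2 (\<Union>(verts (Bs v)))"
      using ys(3,4) uv(3,4) by (auto intro: mem_nbhd_2_self)
    then show "\<exists>ys. gpath K ys \<and> set ys \<subseteq> nbhd K 2 (\<Union>(set (P e))) \<and>
        (\<exists>u v. e = {u, v} \<and> (u, v) \<in> edges H \<and>
          hd ys \<in> nbhd K 2 (\<Union>(verts (Bs u))) \<and> last ys \<in> nbhd K 2 (\<Union>(verts (Bs v))))"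
      using ys(1,2) uv(1,2) by blast
  qed
  from bchoice[OF this] show ?thesis using that by blast
qed

lemma fat_minor_of_skeleton22:
  assumes K: "graph K" "connected_graph K" "r \<in> verts K" and "M \<ge> 2"
    and "fat_minor H (skeleton K r 2 2) M"
  shows "fat_minor H K (M + M / 2 - 2)"
proof -
  let ?T = "skeleton K r 2 2"
  define N where "N A = nbhd K 2 (\<Union>A)" for A
  obtain Bs P where
    Bs: "\<forall>v\<in>verts H. subgraph ?T (Bs v) \<and> connected_graph (Bs v)" and
    P: "\<forall>e\<in>uedges H. gpath ?T (P e) \<and>
        (\<exists>u v. e = {u, v} \<and> (u, v) \<in> edges H \<and> hd (P e) \<in> verts (Bs u) \<and> last (P e) \<in> verts (Bs v))" and
    disj_BB: "\<forall>u\<in>verts H. \<forall>v\<in>verts H. u \<noteq> v \<longrightarrow> r_disjoint ?T M (verts (Bs u)) (verts (Bs v))" and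
    disj_PP: "\<forall>e\<in>uedges H. \<forall>e'\<in>uedges H. e \<noteq> e' \<longrightarrow> r_disjoint ?T M (set (P e)) (set (P e'))" and
    disj_BP: "\<forall>v\<in>verts H. \<forall>e\<in>uedges H. v \<notin> e \<longrightarrow> r_disjoint ?T M (verts (Bs v)) (set (P e))"
    using assms(5) unfolding fat_minor_def by (elim exE conjE) (rule that)
  obtain P' where P': "\<forall>e\<in>uedges H. gpath K (P' e) \<and> set (P' e) \<subseteq> N (set (P e)) \<and>
      (\<exists>u v. e = {u, v} \<and> (u, v) \<in> edges H \<and> hd (P' e) \<in> N (verts (Bs u)) \<and> last (P' e) \<in> N (verts (Bs v)))"
    unfolding N_def by (rule branch_paths_in_nbhd_2_skeleton22[OF K(1,2) P])
  define Bs' where "Bs' v = induced_subgraph K (N (verts (Bs v)))" for v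
  have BsT: "verts (Bs v) \<subseteq> verts ?T" if "v \<in> verts H" for v
    using Bs that unfolding subgraph_def by blast
  have PT: "set (P e) \<subseteq> verts ?T" if "e \<in> uedges H" for e
    using P that walk_verts[of ?T "P e"] unfolding gpath_def by blast
  have thicken: "r_disjoint K (M + M / 2 - 2) (N X) (N Y)"
    if "X \<subseteq> verts ?T" "Y \<subseteq> verts ?T" "r_disjoint ?T M X Y" for X Y
    unfolding N_def by (rule r_disjoint_nbhd_2_skeleton22[OF K assms(4) that])
  have "\<forall>v\<in>verts H. subgraph K (Bs' v) \<and> connected_graph (Bs' v)"
    using Bs subgraph_induced_subgraph[OF K(1) nbhd_subset_verts]
      connected_induced_nbhd_2_skeleton22[OF K(1,2)] unfolding Bs'_def N_def by blast
  moreover have "\<forall>e\<in>uedges H. gpath K (P' e) \<and>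
      (\<exists>u v. e = {u, v} \<and> (u, v) \<in> edges H \<and> hd (P' e) \<in> verts (Bs' u) \<and> last (P' e) \<in> verts (Bs' v))"
    using P' unfolding Bs'_def by simp
  moreover have "\<forall>u\<in>verts H. \<forall>v\<in>verts H. u \<noteq> v \<longrightarrow>
      r_disjoint K (M + M / 2 - 2) (verts (Bs' u)) (verts (Bs' v))"
    using thicken[OF BsT BsT] disj_BB unfolding Bs'_def by simp
  moreover have "\<forall>e\<in>uedges H. \<forall>e'\<in>uedges H. e \<noteq> e' \<longrightarrow>
      r_disjoint K (M + M / 2 - 2) (set (P' e)) (set (P' e'))"
    using r_disjoint_mono[OF thicken[OF PT PT]] disj_PP P' by simp
  moreover have "\<forall>v\<in>verts H. \<forall>e\<in>uedges H. v \<notin> e \<longrightarrow>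
      r_disjoint K (M + M / 2 - 2) (verts (Bs' v)) (set (P' e))"
    using r_disjoint_mono[OF thicken[OF BsT PT] order_refl] disj_BP P' unfolding Bs'_def by simp
  ultimately show ?thesis unfolding fat_minor_def by blast
qed

theorem lemma7:
  fixes G :: "'a graph" and H :: "'b graph" and x0 :: 'a and lam k M :: real
  assumes "graph G" and "connected_graph G" and "unbounded_graph G"
    and "coarsely_bottlenecked G"
    and "x0 \<in> verts G" and "lam \<ge> 1" and "k \<ge> 1"
    and "M \<ge> 4"
    and "graph H"
    and "fat_minor H (skeleton22 G x0 lam k) M"
  shows "fat_minor H (skeleton G x0 lam k) (M + M / 2 - 2)"
proof -
  have lam: "lam > 0" using assms(6) by simp
  have root: "skel_root G x0 lam k \<in> verts (skeleton G x0 lam k)"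
    using skel_root_block[OF lam assms(5)] by (simp add: verts_skeleton)
  have "M \<ge> 2" using assms(8) by simp
  moreover have "fat_minor H (skeleton (skeleton G x0 lam k) (skel_root G x0 lam k) 2 2) M"
    using assms(10) unfolding skeleton22_def .
  ultimately show ?thesis
    by (rule fat_minor_of_skeleton22[OF graph_skeleton[OF assms(1)] connected_skeleton[OF lam assms(2)] root])
qed

end
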